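(* Let $U\subset\mathbb C$ be a bounded domain bounded by a smooth Jordan curve, and let $\chi=\chi(z)\frac{\partial}{\partial z}$ be a holomorphic vector field in a neighborhood of $\overline U$ with $\chi\ne0$ on $\partial U$, whose zeros $p_1,\dots,p_k$ in $U$ are all simple. Let $\omega=dz/\chi(z)$, $c_j=\operatorname{res}(\omega,p_j)\neq 0$, $\alpha_j=\mathrm i\,c_j/|c_j|$, and let $W_j\subset U$ be the canonical neighborhood of $p_j$ for the rotated vector field $\alpha_j\chi$. Let $p_i\ne p_j$ and let $\gamma_i\subset\overline{W_i}$, $\gamma_j\subset\overline{W_j}$ be closed trajectories of $\alpha_i\chi$ and $\alpha_j\chi$ respectively. Then $\gamma_i\cap\gamma_j=\emptyset$.
   Context: The rotated field $\alpha_j\chi$ has purely imaginary residue data at $p_j$ and near $p_j$ its real-time trajectories are closed of period $2\pi|c_j|$. The canonical neighborhood $W_j$ is the largest Jordan domain $W\subset U$ containing $p_j$, invariant under the flow of $\alpha_j\chi$, such that $W\setminus\{p_j\}$ is foliated by closed trajectories of $\alpha_j\chi$ of period $2\pi|c_j|$; its boundary $\partial W_j$ is itself a closed trajectory of $\alpha_j\chi$ of the same period, and $\partial W_j$ meets $\partial U$. *)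

theory Defs
  imports "HOL-Complex_Analysis.Complex_Analysis"
begin

definition smooth_jordan_curve :: "(real \<Rightarrow> complex) \<Rightarrow> bool" where
  "smooth_jordan_curve c \<longleftrightarrow>
     simple_path c \<and> pathfinish c = pathstart c \<and>
     (\<exists>C :: real \<Rightarrow> complex.
        (\<forall>t. C (t + 1) = C t) \<and> (\<forall>t\<in>{0..1}. c t = C t) \<and>
        (\<forall>n t. (((\<lambda>F s. vector_derivative F (at s)) ^^ n) C) differentiable (at t)) \<and>
        (\<forall>t. vector_derivative C (at t) \<noteq> 0))"

definition jordan_domain :: "complex set \<Rightarrow> bool" where
  "jordan_domain W \<longleftrightarrow>
     (\<exists>c. simple_path c \<and> pathfinish c = pathstart c \<and> W = inside (path_image c))"

definition is_solution ::
  "(complex \<Rightarrow> complex) \<Rightarrow> complex set \<Rightarrow> real set \<Rightarrow> (real \<Rightarrow> complex) \<Rightarrow> bool" where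
  "is_solution f V I g \<longleftrightarrow> is_interval I \<and> g ` I \<subseteq> V \<and>
     (\<forall>t\<in>I. (g has_vector_derivative f (g t)) (at t within I))"

definition periodic_solution ::
  "(complex \<Rightarrow> complex) \<Rightarrow> complex set \<Rightarrow> real \<Rightarrow> (real \<Rightarrow> complex) \<Rightarrow> bool" where
  "periodic_solution f V T g \<longleftrightarrow> is_solution f V UNIV g \<and> T > 0 \<and>
     (\<forall>t. g (t + T) = g t) \<and> (\<forall>s. 0 < s \<and> s < T \<longrightarrow> g s \<noteq> g 0)"

definition closed_trajectory ::
  "(complex \<Rightarrow> complex) \<Rightarrow> complex set \<Rightarrow> complex set \<Rightarrow> bool" where
  "closed_trajectory f V \<gamma> \<longleftrightarrow> (\<exists>g T. periodic_solution f V T g \<and> \<gamma> = range g)"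

definition flow_invariant ::
  "(complex \<Rightarrow> complex) \<Rightarrow> complex set \<Rightarrow> complex set \<Rightarrow> bool" where
  "flow_invariant f V W \<longleftrightarrow>
     (\<forall>I g. is_solution f V I g \<and> 0 \<in> I \<and> g 0 \<in> W \<longrightarrow> g ` I \<subseteq> W)"

definition periodic_nbhd ::
  "(complex \<Rightarrow> complex) \<Rightarrow> complex set \<Rightarrow> complex set \<Rightarrow> complex \<Rightarrow> real \<Rightarrow> complex set \<Rightarrow> bool" where
  "periodic_nbhd f V U p T W \<longleftrightarrow>
     jordan_domain W \<and> W \<subseteq> U \<and> p \<in> W \<and> flow_invariant f V W \<and>
     (\<forall>z \<in> W - {p}. \<exists>g. g 0 = z \<and> periodic_solution f V T g \<and> range g \<subseteq> W - {p})"

definition canonical_nbhd ::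
  "(complex \<Rightarrow> complex) \<Rightarrow> complex set \<Rightarrow> complex set \<Rightarrow> complex \<Rightarrow> real \<Rightarrow> complex set \<Rightarrow> bool" where
  "canonical_nbhd f V U p T W \<longleftrightarrow>
     periodic_nbhd f V U p T W \<and> (\<forall>W'. periodic_nbhd f V U p T W' \<longrightarrow> W' \<subseteq> W)"

definition rot_coeff :: "complex \<Rightarrow> complex" where
  "rot_coeff c = \<i> * c / complex_of_real (cmod c)"

end

(*
  Write a = rot_coeff c.  The field a chi is holomorphic, hence locally Lipschitz, so its
  real-time solutions are unique; a closed trajectory is therefore a Jordan curve, along which
  dz/chi integrates to a dt.  Every point of W other than p lies on a closed trajectory, so p
  is the only zero of chi in W.  Let gamma be a closed trajectory in the closure of W.  Its
  inside lies in W, so by the residue theorem the periods of dz/chi on closed paths in the closed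
  region bounded by gamma are integer multiples of 2 pi i c = a 2 pi |c|, i.e. real multiples
  of a.  In particular p lies inside gamma, as the period a T of gamma itself is not zero.

  Let gamma_i and gamma_j meet.  If a_j / a_i is real, uniqueness of solutions makes them the
  same curve, so p_i lies inside gamma_j, hence in W_j, whose only zero is p_j.  Otherwise, in
  the chart given by a primitive of dz/chi, gamma_i is a straight line and gamma_j a transverse
  one, so gamma_j enters the inside of gamma_i.  It must come back to gamma_i; closing this
  excursion along gamma_i gives a loop with period a_j (b - a) + a_i (s_2 - s_1), which is not
  a real multiple of a_i.
*)

theory Submission
  imports Defs
begin

section \<open>Uniqueness of solutions\<close>

lemma is_solution_UNIV_iff:
  "is_solution F V UNIV g \<longleftrightarrow> range g \<subseteq> V \<and> (\<forall>t. (g has_vector_derivative F (g t)) (at t))"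
  by (simp add: is_solution_def)

lemma is_solution_continuous_on:
  "is_solution F V UNIV g \<Longrightarrow> continuous_on A g"
  by (meson continuous_at_imp_continuous_on has_vector_derivative_continuous is_solution_UNIV_iff)

lemma holomorphic_on_lipschitz_cball:
  assumes "F holomorphic_on V" "open V" "cball z R \<subseteq> V"
  obtains L where "L-lipschitz_on (cball z R) F"
proof -
  have "continuous_on (cball z R) (deriv F)"
    using assms by (meson holomorphic_deriv holomorphic_on_imp_continuous_on holomorphic_on_subset)
  then have "bounded (deriv F ` cball z R)"
    by (simp add: compact_continuous_image compact_imp_bounded)
  then obtain L where L: "L \<ge> 0" "\<And>w. w \<in> cball z R \<Longrightarrow> norm (deriv F w) \<le> L"
    by (metis bounded_pos image_eqI less_eq_real_def)
  have "norm (F x - F y) \<le> L * norm (x - y)" if "x \<in> cball z R" "y \<in> cball z R" for x y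
  proof (rule field_differentiable_bound[of "cball z R" F "deriv F"])
    show "\<And>w. w \<in> cball z R \<Longrightarrow> (F has_field_derivative deriv F w) (at w within cball z R)"
      using assms by (meson holomorphic_derivI subsetD)
  qed (use that L in auto)
  then show ?thesis
    using L(1) by (intro that lipschitz_onI) (auto simp: dist_norm)
qed

text \<open>A Gronwall-type argument: \<open>h \<cdot> exp (-L x)\<close> is nonincreasing.\<close>
lemma gronwall_forward_vanishing:
  fixes h h' :: "real \<Rightarrow> real"
  assumes "t0 \<le> t" "h t0 = 0" "\<And>x. h x \<ge> 0"
    and "\<And>x. x \<in> {t0..t} \<Longrightarrow> (h has_real_derivative h' x) (at x)"
    and "\<And>x. x \<in> {t0..t} \<Longrightarrow> h' x \<le> L * h x"
  shows "h t = 0"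
proof -
  define k where "k x = h x * exp (- L * x)" for x
  have "k t \<le> k t0"
  proof (rule DERIV_nonpos_imp_nonincreasing[OF assms(1)])
    fix x assume x: "t0 \<le> x" "x \<le> t"
    have "(k has_real_derivative (h' x - L * h x) * exp (- L * x)) (at x)"
      unfolding k_def using assms(4) x
      by (auto intro!: derivative_eq_intros simp: algebra_simps)
    moreover have "(h' x - L * h x) * exp (- L * x) \<le> 0"
      using assms(5) x by (simp add: mult_nonpos_nonneg)
    ultimately show "\<exists>y. (k has_real_derivative y) (at x) \<and> y \<le> 0" by blast
  qed
  then have "h t \<le> 0"
    using assms(2) by (simp add: k_def mult_le_0_iff)
  with assms(3) show ?thesis by (meson order.antisym)
qed

lemma gronwall_vanishing:
  fixes h h' :: "real \<Rightarrow> real"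
  assumes "h t0 = 0" "\<And>x. h x \<ge> 0"
    and "\<And>x. x \<in> closed_segment t0 t \<Longrightarrow> (h has_real_derivative h' x) (at x)"
    and "\<And>x. x \<in> closed_segment t0 t \<Longrightarrow> \<bar>h' x\<bar> \<le> L * h x"
  shows "h t = 0"
proof (cases "t0 \<le> t")
  case True
  then show ?thesis
    using assms by (intro gronwall_forward_vanishing[of t0 t h h' L])
      (auto simp: closed_segment_eq_real_ivl abs_le_iff)
next
  case False
  have "h (- (- t)) = 0"
  proof (rule gronwall_forward_vanishing[of "- t0" "- t" "\<lambda>x. h (- x)" "\<lambda>x. - h' (- x)" L])
    fix x assume "x \<in> {- t0..- t}"
    then have "- x \<in> closed_segment t0 t"
      using False by (auto simp: closed_segment_eq_real_ivl)
    then show "((\<lambda>x. h (- x)) has_real_derivative - h' (- x)) (at x)"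
      and "- h' (- x) \<le> L * h (- x)"
      using assms(3,4)[of "- x"] DERIV_mirror[where f = h and x = x] by (auto simp: abs_le_iff)
  qed (use False assms in auto)
  then show ?thesis by simp
qed

lemma has_real_derivative_inner_diff_self:
  fixes g1 g2 :: "real \<Rightarrow> 'a :: real_inner"
  assumes "(g1 has_vector_derivative v1) (at t)" "(g2 has_vector_derivative v2) (at t)"
  shows "((\<lambda>t. (g1 t - g2 t) \<bullet> (g1 t - g2 t)) has_real_derivative 2 * ((g1 t - g2 t) \<bullet> (v1 - v2))) (at t)"
proof -
  have "((\<lambda>t. g1 t - g2 t) has_vector_derivative v1 - v2) (at t)"
    using assms by (rule has_vector_derivative_diff)
  then have "((\<lambda>t. (g1 t - g2 t) \<bullet> (g1 t - g2 t)) has_derivative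
      (\<lambda>x. (g1 t - g2 t) \<bullet> (x *\<^sub>R (v1 - v2)) + (x *\<^sub>R (v1 - v2)) \<bullet> (g1 t - g2 t))) (at t)"
    unfolding has_vector_derivative_def by (intro has_derivative_inner)
  then show ?thesis
    unfolding has_field_derivative_def
    by (rule has_derivative_eq_rhs) (auto simp: inner_commute algebra_simps)
qed

text \<open>The squared distance \<open>h\<close> of two solutions satisfies \<open>|h'| \<le> 2 L h\<close> while both stay in a
  disc where the field is \<open>L\<close>-Lipschitz.\<close>
lemma is_solution_locally_unique:
  assumes V: "open V" "F holomorphic_on V"
    and g1: "is_solution F V UNIV g1" and g2: "is_solution F V UNIV g2" and eq: "g1 t0 = g2 t0"
  shows "\<forall>\<^sub>F t in nhds t0. g1 t = g2 t"
proof -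
  define z where "z = g1 t0"
  obtain R where R: "R > 0" "cball z R \<subseteq> V"
    using V g1 open_contains_cball unfolding z_def is_solution_UNIV_iff by blast
  obtain L where L: "L-lipschitz_on (cball z R) F"
    using holomorphic_on_lipschitz_cball[OF V(2,1) R(2)] by blast
  have "isCont g1 t0" "isCont g2 t0"
    using g1 g2 has_vector_derivative_continuous unfolding is_solution_UNIV_iff by blast+
  then obtain d1 d2 where "d1 > 0" "\<And>t. dist t t0 < d1 \<Longrightarrow> dist (g1 t) z < R"
    and "d2 > 0" "\<And>t. dist t t0 < d2 \<Longrightarrow> dist (g2 t) z < R"
    using R(1) eq unfolding continuous_at_eps_delta z_def by metis
  then obtain d where d: "d > 0" "\<And>t. dist t t0 < d \<Longrightarrow> g1 t \<in> ball z R \<and> g2 t \<in> ball z R"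
    by (intro that[of "min d1 d2"]) (auto simp: dist_commute)
  define h where "h t = (g1 t - g2 t) \<bullet> (g1 t - g2 t)" for t
  define h' where "h' t = 2 * ((g1 t - g2 t) \<bullet> (F (g1 t) - F (g2 t)))" for t
  have "(h has_real_derivative h' t) (at t)" for t
    unfolding h_def h'_def using g1 g2
    by (intro has_real_derivative_inner_diff_self) (auto simp: is_solution_UNIV_iff)
  moreover have "\<bar>h' t\<bar> \<le> (2 * L) * h t" if "dist t t0 < d" for t
  proof -
    have "\<bar>h' t\<bar> \<le> 2 * (norm (g1 t - g2 t) * norm (F (g1 t) - F (g2 t)))"
      unfolding h'_def using Cauchy_Schwarz_ineq2 by (simp add: abs_mult)
    also have "\<dots> \<le> 2 * (norm (g1 t - g2 t) * (L * norm (g1 t - g2 t)))"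
      using d(2)[OF that] lipschitz_on_normD[OF L] by (intro mult_left_mono) auto
    finally show ?thesis
      by (simp add: h_def power2_norm_eq_inner[symmetric] power2_eq_square algebra_simps)
  qed
  moreover have "closed_segment t0 t \<subseteq> ball t0 d" if "dist t t0 < d" for t
    using that d(1) by (intro closed_segment_subset) (auto simp: dist_commute)
  ultimately have "h t = 0" if "dist t t0 < d" for t
    using that eq by (intro gronwall_vanishing[of h t0 t h' "2 * L"])
      (auto simp: h_def dist_commute subset_iff)
  then show ?thesis
    unfolding eventually_nhds_metric h_def using d(1) by auto
qed

lemma is_solution_unique:
  assumes "open V" "F holomorphic_on V"
    and g1: "is_solution F V UNIV g1" and g2: "is_solution F V UNIV g2" and "g1 t0 = g2 t0"
  shows "g1 = g2"
proof -
  have "closed {t. g1 t = g2 t}"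
    using g1 g2 by (intro closed_Collect_eq is_solution_continuous_on)
  moreover have "open {t. g1 t = g2 t}"
  proof (rule Topological_Spaces.openI)
    fix t assume "t \<in> {t. g1 t = g2 t}"
    then have "\<forall>\<^sub>F s in nhds t. g1 s = g2 s"
      using is_solution_locally_unique[OF assms(1,2) g1 g2] by simp
    then show "\<exists>T. open T \<and> t \<in> T \<and> T \<subseteq> {t. g1 t = g2 t}"
      unfolding eventually_nhds by auto
  qed
  ultimately have "{t. g1 t = g2 t} = UNIV"
    using clopen[of "{t. g1 t = g2 t}"] assms(5) by blast
  then show ?thesis by auto
qed

lemma is_solution_affine_reparam:
  assumes "is_solution F V UNIV g"
  shows "is_solution (\<lambda>z. r *\<^sub>R F z) V UNIV (\<lambda>t. g (r * t + s))"
proof -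
  have "((\<lambda>t. g (r * t + s)) has_vector_derivative r *\<^sub>R F (g (r * t + s))) (at t)" for t
  proof -
    have "((\<lambda>t. r * t + s) has_vector_derivative r) (at t)"
      by (auto intro!: derivative_eq_intros)
    from vector_diff_chain_at[OF this, of g] assms show ?thesis
      by (simp add: o_def is_solution_UNIV_iff)
  qed
  then show ?thesis using assms by (auto simp: is_solution_UNIV_iff)
qed

lemma is_solution_shift:
  assumes "is_solution F V UNIV g"
  shows "is_solution F V UNIV (\<lambda>t. g (t + s))"
  using is_solution_affine_reparam[OF assms, of 1 s] by simp

lemma range_affine_reparam:
  fixes g :: "real \<Rightarrow> 'a"
  assumes "r \<noteq> 0"
  shows "range (\<lambda>t. g (r * t + s)) = range g"
proof -
  have "g u = g (r * ((u - s) / r) + s)" for u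
    using assms by simp
  then show ?thesis by blast
qed

section \<open>Periodic orbits\<close>

locale periodic_orbit =
  fixes F :: "complex \<Rightarrow> complex" and V :: "complex set" and T :: real and g :: "real \<Rightarrow> complex"
  assumes open_domain: "open V" and holomorphic_field: "F holomorphic_on V"
    and periodic_solution: "periodic_solution F V T g"
begin

lemma solution: "is_solution F V UNIV g"
  and period_pos: "T > 0"
  and periodic: "g (t + T) = g t"
  and minimal_period: "0 < s \<Longrightarrow> s < T \<Longrightarrow> g s \<noteq> g 0"
  using periodic_solution unfolding periodic_solution_def by auto

lemma periodic_int: "g (t + of_int m * T) = g t"
proof (induction m rule: int_induct[where k = 0])
  case (step1 i)
  have "g (t + of_int (i + 1) * T) = g ((t + of_int i * T) + T)"
    by (simp add: algebra_simps)
  with step1 show ?case by (simp only: periodic)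
next
  case (step2 i)
  have "g (t + of_int i * T) = g ((t + of_int (i - 1) * T) + T)"
    by (simp add: algebra_simps)
  with step2 show ?case by (simp only: periodic)
qed simp

lemma exists_period_shift: "\<exists>m::int. s \<le> u - of_int m * T \<and> u - of_int m * T < s + T"
  using floor_divide_lower[OF period_pos, of "u - s"] floor_divide_upper[OF period_pos, of "u - s"]
  by (intro exI[of _ "\<lfloor>(u - s) / T\<rfloor>"]) (auto simp: algebra_simps)

lemma injective_on_period:
  assumes "s < u" "u < s + T"
  shows "g u \<noteq> g s"
proof
  assume "g u = g s"
  then have "(\<lambda>v. g (v + s)) = (\<lambda>v. g (v + u))"
    by (intro is_solution_unique[OF open_domain holomorphic_field, of _ _ 0] is_solution_shift solution)
      simp
  then have "g (- s + s) = g (- s + u)"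
    by meson
  then show False
    using minimal_period[of "u - s"] assms by simp
qed

lemma field_nonzero: "F (g t) \<noteq> 0"
proof
  assume "F (g t) = 0"
  then have "is_solution F V UNIV (\<lambda>_. g t)"
    using solution by (auto simp: is_solution_UNIV_iff)
  then have const: "g = (\<lambda>_. g t)"
    by (intro is_solution_unique[OF open_domain holomorphic_field solution, of _ t]) auto
  have "g (T / 2) = g 0"
    using fun_cong[OF const, of "T / 2"] fun_cong[OF const, of 0] by simp
  then show False
    using minimal_period[of "T / 2"] period_pos by simp
qed

lemma return_time_near:
  assumes "\<epsilon> > 0"
  obtains \<delta> where "\<delta> > 0" "\<And>u. dist (g u) (g s) < \<delta> \<Longrightarrow> \<exists>m::int. \<bar>u - s - of_int m * T\<bar> \<le> \<epsilon>"
proof -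
  define K where "K = g ` {s + \<epsilon> .. s + T - \<epsilon>}"
  have "compact K"
    unfolding K_def by (intro compact_continuous_image is_solution_continuous_on[OF solution]) auto
  moreover have "g s \<notin> K"
    using injective_on_period[of s] assms unfolding K_def by force
  ultimately obtain \<delta> where "\<delta> > 0" "ball (g s) \<delta> \<inter> K = {}"
    by (metis compact_imp_closed open_Compl open_contains_ball ComplI disjoint_eq_subset_Compl)
  moreover have "\<exists>m::int. \<bar>u - s - of_int m * T\<bar> \<le> \<epsilon>" if "dist (g u) (g s) < \<delta>" for u
  proof -
    obtain m :: int where m: "s - \<epsilon> \<le> u - of_int m * T" "u - of_int m * T < s - \<epsilon> + T"
      using exists_period_shift by blast
    have "g (u - of_int m * T) = g u"
      using periodic_int[of "u - of_int m * T" m] by simp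
    moreover have "g u \<in> ball (g s) \<delta>"
      using that by (simp add: dist_commute)
    ultimately have "g (u - of_int m * T) \<notin> K"
      using \<open>ball (g s) \<delta> \<inter> K = {}\<close> by auto
    then have "u - of_int m * T \<le> s + \<epsilon>"
      using m unfolding K_def by force
    then show ?thesis using m by (intro exI[of _ m]) auto
  qed
  ultimately show ?thesis using that by blast
qed

lemma bracket_by_returns:
  obtains lo hi where "lo \<le> t" "t \<le> hi" "g lo = g s" "g hi = g s"
proof -
  obtain m :: int where "s \<le> t - of_int m * T" "t - of_int m * T < s + T"
    using exists_period_shift by blast
  then show ?thesis
    using periodic_int[of s m] periodic[of "s + of_int m * T"]
    by (intro that[of "s + of_int m * T" "s + of_int m * T + T"]) (auto simp: algebra_simps)
qed

definition orbit_loop :: "real \<Rightarrow> complex" where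
  "orbit_loop x = g (T * x)"

lemma path_image_orbit_loop: "path_image orbit_loop = range g"
proof
  show "range g \<subseteq> path_image orbit_loop"
  proof
    fix z assume "z \<in> range g"
    then obtain u where u: "z = g u" by auto
    obtain m :: int where m: "0 \<le> u - of_int m * T" "u - of_int m * T < 0 + T"
      using exists_period_shift by blast
    have "orbit_loop ((u - of_int m * T) / T) = z"
      using periodic_int[of u "- m"] period_pos unfolding orbit_loop_def u by simp
    moreover have "(u - of_int m * T) / T \<in> {0..1}"
      using m period_pos by (auto simp: field_simps)
    ultimately show "z \<in> path_image orbit_loop"
      unfolding path_image_def by blast
  qed
qed (auto simp: path_image_def orbit_loop_def)

lemma simple_path_orbit_loop: "simple_path orbit_loop"
  unfolding simple_path_def loop_free_def
proof (intro conjI ballI impI)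
  show "path orbit_loop"
    unfolding path_def orbit_loop_def
    by (intro continuous_on_compose2[OF is_solution_continuous_on[OF solution, of UNIV]]
        continuous_intros) auto
  have less: "x = y" if "x \<in> {0..1}" "y \<in> {0..1}" "x < y" "\<not> (x = 0 \<and> y = 1)"
    "orbit_loop x = orbit_loop y" for x y
  proof -
    have "T * (y - x) < T * 1"
      using that period_pos by (intro mult_strict_left_mono) auto
    then show ?thesis
      using injective_on_period[of "T * x" "T * y"] that period_pos
      by (auto simp: orbit_loop_def algebra_simps)
  qed
  show "x = y \<or> x = 0 \<and> y = 1 \<or> x = 1 \<and> y = 0"
    if "x \<in> {0..1}" "y \<in> {0..1}" "orbit_loop x = orbit_loop y" for x y
    using that less[of x y] less[of y x] by (cases x y rule: linorder_cases) auto
qed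

lemma closed_orbit_loop: "pathfinish orbit_loop = pathstart orbit_loop"
  using periodic[of 0] by (simp add: pathfinish_def pathstart_def orbit_loop_def)

lemmas Jordan_inside_outside_orbit =
  Jordan_inside_outside[OF simple_path_orbit_loop closed_orbit_loop, unfolded path_image_orbit_loop]

end

section \<open>Integrating \<open>dz / \<chi>\<close> along solutions\<close>

lemma has_vector_derivative_solution_linepath:
  assumes "is_solution F V UNIV g"
  shows "((g \<circ> linepath x y) has_vector_derivative (y - x) *\<^sub>R F (g (linepath x y u))) (at u)"
  using vector_diff_chain_at[OF has_vector_derivative_linepath_within, of g] assms
  by (simp add: is_solution_UNIV_iff)

lemma valid_path_solution_linepath:
  assumes g: "is_solution F V UNIV g" and F: "continuous_on V F"
  shows "valid_path (g \<circ> linepath x y)"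
proof -
  have "continuous_on UNIV (F \<circ> g \<circ> linepath x y)"
    using g F by (intro continuous_on_compose is_solution_continuous_on)
      (auto simp: is_solution_UNIV_iff intro: continuous_on_subset)
  then have "continuous_on {0..1} (\<lambda>u. (y - x) *\<^sub>R F (g (linepath x y u)))"
    by (intro continuous_intros) (auto intro: continuous_on_subset)
  then have "(g \<circ> linepath x y) C1_differentiable_on {0..1}"
    unfolding C1_differentiable_on_def
    using has_vector_derivative_solution_linepath[OF g, of x y]
    by (intro exI[of _ "\<lambda>u. (y - x) *\<^sub>R F (g (linepath x y u))"]) blast
  then show ?thesis
    unfolding valid_path_def by (rule C1_differentiable_imp_piecewise)
qed

lemma has_contour_integral_solution_linepath:
  assumes g: "is_solution (\<lambda>z. a * chi z) V UNIV g" and nz: "\<And>t. chi (g t) \<noteq> 0"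
  shows "((\<lambda>w. 1 / chi w) has_contour_integral a * of_real (y - x)) (g \<circ> linepath x y)"
proof -
  have integrand: "a * of_real (y - x) =
      1 / chi ((g \<circ> linepath x y) u) * vector_derivative (g \<circ> linepath x y) (at u within {0..1})"
    if "u \<in> {0..1}" for u
    using vector_derivative_at_within_ivl[OF has_vector_derivative_solution_linepath[OF g]] that nz
    by (simp add: scaleR_conv_of_real field_simps)
  have "((\<lambda>u. a * of_real (y - x)) has_integral a * of_real (y - x)) {0..1::real}"
    using has_integral_const_real[of "a * of_real (y - x)" 0 1] by simp
  then have "((\<lambda>u. 1 / chi ((g \<circ> linepath x y) u) * vector_derivative (g \<circ> linepath x y) (at u within {0..1}))
      has_integral a * of_real (y - x)) {0..1}"
    by (rule has_integral_eq[rotated]) (rule integrand)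
  then show ?thesis
    unfolding has_contour_integral_def by simp
qed

section \<open>Jordan curves\<close>

lemma connected_unbounded_subset_outside:
  fixes C K :: "'a :: real_normed_vector set"
  assumes "connected C" "C \<inter> K = {}" "\<not> bounded C"
  shows "C \<subseteq> outside K"
proof
  fix z assume "z \<in> C"
  then have "C \<subseteq> connected_component_set (- K) z"
    using assms by (intro connected_component_maximal) auto
  then show "z \<in> outside K"
    using assms(3) bounded_subset by (auto simp: outside)
qed

lemma connected_meets_inside_subset:
  fixes C K :: "'a :: real_normed_vector set"
  assumes "connected C" "C \<inter> K = {}" "x \<in> C" "x \<in> inside K"
  shows "C \<subseteq> inside K"
proof
  fix z assume "z \<in> C"
  moreover have "C \<subseteq> connected_component_set (- K) x"
    using assms by (intro connected_component_maximal) auto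
  ultimately have "z \<in> connected_component_set (- K) x"
    by blast
  then show "z \<in> inside K"
    using inside_same_component[of K x z] assms by auto
qed

lemma outside_Jordan_subset_outside:
  fixes J :: "real \<Rightarrow> complex"
  assumes "simple_path J" "pathfinish J = pathstart J"
    and "K \<subseteq> inside (path_image J) \<union> path_image J"
  shows "outside (path_image J) \<subseteq> outside K"
proof -
  note Jordan = Jordan_inside_outside[OF assms(1,2)]
  have "outside (path_image J) \<inter> K = {}"
    using Jordan assms(3) outside_no_overlap[of "path_image J"] by blast
  then show ?thesis
    using Jordan by (intro connected_unbounded_subset_outside) auto
qed

lemma inside_subset_Jordan_inside:
  fixes J :: "real \<Rightarrow> complex"
  assumes J: "simple_path J" "pathfinish J = pathstart J"
    and K: "closed K" "K \<subseteq> inside (path_image J) \<union> path_image J"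
  shows "inside K \<subseteq> inside (path_image J)"
proof -
  note Jordan = Jordan_inside_outside[OF J]
  have "inside K \<inter> outside (path_image J) = {}"
    using outside_Jordan_subset_outside[OF J K(2)] inside_Int_outside by blast
  then have "inside K \<inter> closure (outside (path_image J)) = {}"
    using open_Int_closure_eq_empty[OF open_inside[OF K(1)]] by blast
  moreover have "closure (outside (path_image J)) = outside (path_image J) \<union> path_image J"
    using Jordan by (simp add: closure_Un_frontier)
  ultimately have "inside K \<subseteq> - (path_image J \<union> outside (path_image J))"
    by blast
  then show ?thesis
    by (simp add: inside_outside)
qed

lemma residue_theorem_Jordan_region:
  fixes f :: "complex \<Rightarrow> complex" and J P :: "real \<Rightarrow> complex"
  assumes S: "open S" "f holomorphic_on S - {p}"
    and J: "simple_path J" "pathfinish J = pathstart J"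
    and JS: "inside (path_image J) \<union> path_image J \<subseteq> S"
    and P: "valid_path P" "pathfinish P = pathstart P"
      "path_image P \<subseteq> inside (path_image J) \<union> path_image J" "p \<notin> path_image P"
  shows "contour_integral P f = 2 * pi * \<i> * winding_number P p * residue f p"
proof -
  define A where "A = inside (path_image J) \<union> path_image J"
  have "connected A" "A \<noteq> {}"
    using J Jordan_inside_outside[OF J] connected_with_inside[of "path_image J"]
    by (auto simp: A_def Un_commute closed_simple_path_image connected_simple_path_image)
  then obtain x0 where "x0 \<in> A" by blast
  define C where "C = connected_component_set S x0"
  have C: "open C" "connected C" "C \<subseteq> S"
    using S(1) by (auto simp: C_def open_connected_component connected_component_subset)
  have "A \<subseteq> C"
    unfolding C_def using JS \<open>x0 \<in> A\<close> \<open>connected A\<close>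
    by (intro connected_component_maximal) (auto simp: A_def)
  have "winding_number P z = 0" if "z \<notin> C" for z
  proof -
    have "z \<in> outside (path_image J)"
      using that \<open>A \<subseteq> C\<close> by (auto simp: A_def outside_inside)
    then have "z \<in> outside (path_image P)"
      using outside_Jordan_subset_outside[OF J P(3)] by blast
    then show ?thesis
      using winding_number_zero_in_outside valid_path_imp_path P by blast
  qed
  then have "contour_integral P f = 2 * pi * \<i> * (\<Sum>q\<in>{p}. winding_number P q * residue f q)"
    using C \<open>A \<subseteq> C\<close> P S(2) holomorphic_on_subset[of f "S - {p}" "C - {p}"]
    by (intro Residue_theorem[OF C(1,2), of "{p}"]) (auto simp: A_def)
  then show ?thesis by simp
qed

lemma excursion_into_open:
  fixes g :: "real \<Rightarrow> 'a :: topological_space"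
  assumes g: "continuous_on UNIV g" and D: "open D" "frontier D \<subseteq> K"
    and t: "lo \<le> t" "t \<le> hi" "g lo \<notin> D" "g hi \<notin> D" "g t \<in> D"
  obtains a b where "a < b" "g a \<in> K" "g b \<in> K" "g ` {a..b} \<subseteq> D \<union> K"
proof -
  define A1 where "A1 = {lo..t} \<inter> g -` (- D)"
  define A2 where "A2 = {t..hi} \<inter> g -` (- D)"
  have closed: "closed A1" "closed A2"
    unfolding A1_def A2_def using g D
    by (auto intro!: closed_vimage simp: closed_Compl)
  have bdd: "bdd_above A1" "bdd_below A2"
    unfolding A1_def A2_def by auto
  define a where "a = Sup A1"
  define b where "b = Inf A2"
  have "lo \<in> A1" "hi \<in> A2"
    using t unfolding A1_def A2_def by auto
  then have "a \<in> A1" "b \<in> A2"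
    unfolding a_def b_def using closed_contains_Sup[OF _ bdd(1) closed(1)]
      closed_contains_Inf[OF _ bdd(2) closed(2)] by auto
  then have ab: "a < t" "t < b" "g a \<notin> D" "g b \<notin> D"
    using t unfolding A1_def A2_def by (auto simp: less_le)
  have "g s \<in> D" if "a < s" "s < b" for s
  proof (rule ccontr)
    assume "g s \<notin> D"
    then have "s \<in> A1 \<or> s \<in> A2"
      using that \<open>a \<in> A1\<close> \<open>b \<in> A2\<close> unfolding A1_def A2_def by auto
    then show False
      using that cSup_upper[OF _ bdd(1)] cInf_lower[OF _ bdd(2)] unfolding a_def b_def by force
  qed
  then have "g ` {a<..<b} \<subseteq> closure D"
    using closure_subset by fastforce
  then have "g ` {a..b} \<subseteq> closure D"
    using image_closure_subset[of "{a<..<b}" g "closure D"] g ab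
    by (auto intro: continuous_on_subset)
  moreover have "closure D = D \<union> frontier D"
    using D(1) by (simp add: closure_Un_frontier)
  ultimately have image: "g ` {a..b} \<subseteq> D \<union> K"
    using D(2) by auto
  have "a \<in> {a..b}" "b \<in> {a..b}"
    using ab by auto
  then have "g a \<in> K" "g b \<in> K"
    using subsetD[OF image imageI] ab by (metis UnE)+
  then show ?thesis
    using ab image by (intro that[of a b]) auto
qed

section \<open>Crossing orbits\<close>

lemma injective_local_primitive:
  fixes chi :: "complex \<Rightarrow> complex"
  assumes V: "open V" "chi holomorphic_on V" and z0: "z0 \<in> V" "chi z0 \<noteq> 0" and "a \<noteq> 0"
  obtains \<rho> \<Phi> where "\<rho> > 0" "ball z0 \<rho> \<subseteq> V" "\<And>z. z \<in> ball z0 \<rho> \<Longrightarrow> chi z \<noteq> 0"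
    "\<And>z. z \<in> ball z0 \<rho> \<Longrightarrow> (\<Phi> has_field_derivative 1 / (a * chi z)) (at z)"
    "\<Phi> holomorphic_on ball z0 \<rho>" "inj_on \<Phi> (ball z0 \<rho>)" "\<Phi> z0 = 0"
proof -
  have "open (V \<inter> chi -` (- {0}))"
    using V by (intro continuous_open_preimage holomorphic_on_imp_continuous_on) auto
  then obtain r where r: "r > 0" "ball z0 r \<subseteq> V \<inter> chi -` (- {0})"
    using z0 open_contains_ball by blast
  then have "(\<lambda>z. 1 / (a * chi z)) holomorphic_on ball z0 r"
    using V(2) \<open>a \<noteq> 0\<close> by (intro holomorphic_intros) (auto intro: holomorphic_on_subset)
  then obtain G where "\<And>z. z \<in> ball z0 r \<Longrightarrow> (G has_field_derivative 1 / (a * chi z)) (at z within ball z0 r)"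
    using holomorphic_convex_primitive'[OF convex_ball open_ball] by blast
  then have G0: "\<And>z. z \<in> ball z0 r \<Longrightarrow> (G has_field_derivative 1 / (a * chi z)) (at z)"
    by (metis at_within_open open_ball)
  define \<Phi> where "\<Phi> z = G z - G z0" for z
  have \<Phi>: "(\<Phi> has_field_derivative 1 / (a * chi z)) (at z)" if "z \<in> ball z0 r" for z
    using DERIV_diff[OF G0[OF that] DERIV_const[of "G z0"]] unfolding \<Phi>_def by simp
  then have hol: "\<Phi> holomorphic_on ball z0 r"
    unfolding holomorphic_on_def field_differentiable_def by (blast intro: has_field_derivative_at_within)
  moreover have "deriv \<Phi> z0 \<noteq> 0"
    using DERIV_imp_deriv[OF \<Phi>[of z0]] r z0 \<open>a \<noteq> 0\<close> by simp
  ultimately obtain \<rho> where "\<rho> > 0" "ball z0 \<rho> \<subseteq> ball z0 r" "inj_on \<Phi> (ball z0 \<rho>)"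
    using has_complex_derivative_locally_injective[OF hol centre_in_ball[THEN iffD2, OF r(1)] open_ball]
    by blast
  then show ?thesis
    using r by (intro that[of \<rho> \<Phi>] \<Phi> holomorphic_on_subset[OF hol]) (auto simp: \<Phi>_def)
qed

lemma primitive_along_solution:
  fixes chi G :: "complex \<Rightarrow> complex"
  assumes g: "is_solution (\<lambda>z. b * chi z) V UNIV g" and B: "open B" "g t \<in> B"
    and G: "\<And>z. z \<in> B \<Longrightarrow> chi z \<noteq> 0" "\<And>z. z \<in> B \<Longrightarrow> (G has_field_derivative 1 / (a * chi z)) (at z)"
  obtains \<epsilon> where "\<epsilon> > 0"
    "\<And>e. \<bar>e\<bar> \<le> \<epsilon> \<Longrightarrow> g (t + e) \<in> B \<and> G (g (t + e)) = G (g t) + b / a * e"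
proof -
  obtain r where "r > 0" "ball (g t) r \<subseteq> B"
    using B open_contains_ball by blast
  moreover have "isCont g t"
    using g has_vector_derivative_continuous unfolding is_solution_UNIV_iff by blast
  ultimately obtain d where d: "d > 0" "\<And>s. dist s t < d \<Longrightarrow> g s \<in> B"
    unfolding continuous_at_eps_delta by (metis dist_commute mem_ball subsetD)
  define \<epsilon> where "\<epsilon> = d / 2"
  have inB: "g (t + e) \<in> B" if "e \<in> {-\<epsilon>..\<epsilon>}" for e
    using d that by (auto simp: \<epsilon>_def dist_real_def)
  have "((\<lambda>e. G (g (t + e)) - b / a * e) has_vector_derivative 0) (at e within {-\<epsilon>..\<epsilon>})"
    if "e \<in> {-\<epsilon>..\<epsilon>}" for e
  proof -
    have "((\<lambda>e. t + e) has_vector_derivative 1) (at e)"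
      by (auto intro!: derivative_eq_intros)
    from vector_diff_chain_at[OF this, of g] g
    have "((\<lambda>e. g (t + e)) has_vector_derivative b * chi (g (t + e))) (at e)"
      by (simp add: o_def is_solution_UNIV_iff)
    from field_vector_diff_chain_at[OF this G(2)[OF inB[OF that]]]
    have "((\<lambda>e. G (g (t + e))) has_vector_derivative b / a) (at e)"
      using G(1)[OF inB[OF that]] by (simp add: o_def)
    moreover have "((\<lambda>e. b / a * of_real e) has_vector_derivative b / a) (at e)"
      using has_vector_derivative_mult_right[OF has_vector_derivative_of_real[OF DERIV_ident], of "b / a"]
      by simp
    ultimately show ?thesis
      using has_vector_derivative_diff has_vector_derivative_at_within by fastforce
  qed
  then obtain c where c: "\<And>e. e \<in> {-\<epsilon>..\<epsilon>} \<Longrightarrow> G (g (t + e)) - b / a * e = c"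
    using has_vector_derivative_zero_constant[OF convex_real_interval(5)] by blast
  have "\<epsilon> > 0"
    using d by (simp add: \<epsilon>_def)
  then have "G (g t) = c"
    using c[of 0] by simp
  with c have "G (g (t + e)) = G (g t) + b / a * e" if "e \<in> {-\<epsilon>..\<epsilon>}" for e
    using that by (simp add: algebra_simps)
  then show ?thesis
    using inB \<open>\<epsilon> > 0\<close> by (intro that[of \<epsilon>]) (auto simp: abs_le_iff)
qed

lemma periodic_orbit_in_chart:
  fixes chi \<Phi> :: "complex \<Rightarrow> complex"
  assumes V: "open V" "chi holomorphic_on V"
    and g: "periodic_solution (\<lambda>z. a * chi z) V S g" "g s = z0"
    and chart: "\<rho> > 0" "\<And>z. z \<in> ball z0 \<rho> \<Longrightarrow> chi z \<noteq> 0"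
      "\<And>z. z \<in> ball z0 \<rho> \<Longrightarrow> (\<Phi> has_field_derivative 1 / (a * chi z)) (at z)"
      "inj_on \<Phi> (ball z0 \<rho>)" "\<Phi> z0 = 0"
  obtains \<delta> \<epsilon> where "0 < \<delta>" "\<delta> \<le> \<rho>" "0 < \<epsilon>"
    "\<And>z. z \<in> ball z0 \<delta> \<Longrightarrow> cmod (\<Phi> z) < \<epsilon> \<Longrightarrow> z \<in> range g \<longleftrightarrow> Im (\<Phi> z) = 0"
proof -
  interpret periodic_orbit "\<lambda>z. a * chi z" V S g
    using V g by unfold_locales (auto intro: holomorphic_intros)
  have "a \<noteq> 0"
    using field_nonzero by auto
  obtain \<epsilon> where \<epsilon>: "\<epsilon> > 0" "\<And>e. \<bar>e\<bar> \<le> \<epsilon> \<Longrightarrow> g (s + e) \<in> ball z0 \<rho> \<and> \<Phi> (g (s + e)) = e"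
    using primitive_along_solution[OF solution, where B = "ball z0 \<rho>" and t = s and G = \<Phi> and a = a]
      chart g(2) \<open>a \<noteq> 0\<close> by auto
  obtain \<delta> where \<delta>: "\<delta> > 0" "\<And>u. dist (g u) (g s) < \<delta> \<Longrightarrow> \<exists>m::int. \<bar>u - s - of_int m * S\<bar> \<le> \<epsilon>"
    using return_time_near[OF \<epsilon>(1)] by blast
  have "z \<in> range g \<longleftrightarrow> Im (\<Phi> z) = 0" if z: "z \<in> ball z0 (min \<delta> \<rho>)" "cmod (\<Phi> z) < \<epsilon>" for z
  proof
    assume "z \<in> range g"
    then obtain u where u: "z = g u" by auto
    then obtain m :: int where m: "\<bar>u - s - of_int m * S\<bar> \<le> \<epsilon>"
      using \<delta>(2) z(1) g(2) by (auto simp: dist_commute)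
    have "z = g (s + (u - s - of_int m * S))"
      using periodic_int[of "s + (u - s - of_int m * S)" m] u by simp
    then show "Im (\<Phi> z) = 0"
      using \<epsilon>(2)[OF m] by simp
  next
    assume "Im (\<Phi> z) = 0"
    then have e: "\<Phi> z = of_real (Re (\<Phi> z))"
      by (simp add: complex_eq_iff)
    then have "\<bar>Re (\<Phi> z)\<bar> \<le> \<epsilon>"
      using z(2) by (metis norm_of_real less_imp_le)
    then have "g (s + Re (\<Phi> z)) \<in> ball z0 \<rho>" "\<Phi> (g (s + Re (\<Phi> z))) = \<Phi> z"
      using \<epsilon>(2) e by auto
    then have "g (s + Re (\<Phi> z)) = z"
      using chart(4) z(1) by (auto dest: inj_onD)
    then show "z \<in> range g"
      by (metis rangeI)
  qed
  then show ?thesis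
    using that[of "min \<delta> \<rho>" \<epsilon>] \<delta> \<epsilon> chart(1) by auto
qed

lemma connected_preimage_injective_holomorphic:
  assumes "f holomorphic_on S" "open S" "inj_on f S" "C \<subseteq> f ` S" "connected C"
  shows "connected {z \<in> S. f z \<in> C}"
proof -
  obtain h where h: "h holomorphic_on f ` S" "\<And>z. z \<in> S \<Longrightarrow> h (f z) = z"
    using holomorphic_has_inverse[OF assms(1-3)] by metis
  have "{z \<in> S. f z \<in> C} = h ` C"
    using h(2) assms(4) by force
  moreover have "continuous_on C h"
    using h(1) assms(4) holomorphic_on_imp_continuous_on holomorphic_on_subset by blast
  ultimately show ?thesis
    using connected_continuous_image assms(5) by metis
qed

lemma injective_holomorphic_half_discs:
  fixes \<Phi> :: "complex \<Rightarrow> complex"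
  assumes \<Phi>: "\<Phi> holomorphic_on B" "open B" "inj_on \<Phi> B" and z0: "z0 \<in> B" "\<Phi> z0 = 0" and "\<epsilon> > 0"
  obtains \<eta> where "0 < \<eta>" "\<eta> \<le> \<epsilon>" "open {z \<in> B. cmod (\<Phi> z) < \<eta>}"
    "connected {z \<in> B. cmod (\<Phi> z) < \<eta> \<and> Im (\<Phi> z) > 0}"
    "connected {z \<in> B. cmod (\<Phi> z) < \<eta> \<and> Im (\<Phi> z) < 0}"
proof -
  have "open (\<Phi> ` B)" "0 \<in> \<Phi> ` B"
    using open_mapping_thm3[OF \<Phi>] z0 by auto
  then obtain \<eta>0 where "\<eta>0 > 0" "ball 0 \<eta>0 \<subseteq> \<Phi> ` B"
    using open_contains_ball by blast
  define \<eta> where "\<eta> = min \<eta>0 \<epsilon>"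
  have \<eta>: "0 < \<eta>" "\<eta> \<le> \<epsilon>" "ball 0 \<eta> \<subseteq> \<Phi> ` B"
    using \<open>\<eta>0 > 0\<close> \<open>\<epsilon> > 0\<close> \<open>ball 0 \<eta>0 \<subseteq> \<Phi> ` B\<close> by (auto simp: \<eta>_def)
  have "open (B \<inter> \<Phi> -` ball 0 \<eta>)"
    using \<Phi> by (intro continuous_open_preimage holomorphic_on_imp_continuous_on) auto
  moreover have "B \<inter> \<Phi> -` ball 0 \<eta> = {z \<in> B. cmod (\<Phi> z) < \<eta>}"
    by auto
  moreover have "connected {z \<in> B. \<Phi> z \<in> ball 0 \<eta> \<inter> {w. Im w > 0}}"
    "connected {z \<in> B. \<Phi> z \<in> ball 0 \<eta> \<inter> {w. Im w < 0}}"
    using \<eta>(3) by (intro connected_preimage_injective_holomorphic[OF \<Phi>] convex_connected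
        convex_Int convex_ball convex_halfspace_Im_gt convex_halfspace_Im_lt; blast)+
  ultimately show ?thesis
    using that \<eta>(1,2) by simp
qed

text \<open>A flow box: the primitive \<open>\<Phi>\<close> of \<open>dz / (a \<chi>)\<close> turns every field \<open>b \<chi>\<close> near \<open>g s\<close> into
  the constant field \<open>b / a\<close>.\<close>
lemma periodic_orbit_flow_box:
  fixes chi :: "complex \<Rightarrow> complex"
  assumes V: "open V" "chi holomorphic_on V" and g: "periodic_solution (\<lambda>z. a * chi z) V S g"
  obtains Q \<Phi> where "open Q" "g s \<in> Q" "\<And>z. z \<in> Q \<Longrightarrow> z \<in> range g \<longleftrightarrow> Im (\<Phi> z) = 0"
    "connected {z \<in> Q. Im (\<Phi> z) > 0}" "connected {z \<in> Q. Im (\<Phi> z) < 0}"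
    "\<And>b h t. is_solution (\<lambda>z. b * chi z) V UNIV h \<Longrightarrow> h t = g s \<Longrightarrow>
      \<exists>\<epsilon>>0. \<forall>e. \<bar>e\<bar> \<le> \<epsilon> \<longrightarrow> h (t + e) \<in> Q \<and> \<Phi> (h (t + e)) = b / a * e"
proof -
  interpret periodic_orbit "\<lambda>z. a * chi z" V S g
    using V g by unfold_locales (auto intro: holomorphic_intros)
  define z0 where "z0 = g s"
  have "z0 \<in> V" "chi z0 \<noteq> 0" "a \<noteq> 0"
    using solution field_nonzero[of s] by (auto simp: z0_def is_solution_UNIV_iff)
  then obtain \<rho> \<Phi> where chart: "\<rho> > 0" "ball z0 \<rho> \<subseteq> V" "\<And>z. z \<in> ball z0 \<rho> \<Longrightarrow> chi z \<noteq> 0"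
      "\<And>z. z \<in> ball z0 \<rho> \<Longrightarrow> (\<Phi> has_field_derivative 1 / (a * chi z)) (at z)"
      "\<Phi> holomorphic_on ball z0 \<rho>" "inj_on \<Phi> (ball z0 \<rho>)" "\<Phi> z0 = 0"
    using injective_local_primitive[OF V] by metis
  obtain \<delta> \<epsilon> where \<delta>: "0 < \<delta>" "\<delta> \<le> \<rho>" "0 < \<epsilon>"
    and on_orbit: "\<And>z. z \<in> ball z0 \<delta> \<Longrightarrow> cmod (\<Phi> z) < \<epsilon> \<Longrightarrow> z \<in> range g \<longleftrightarrow> Im (\<Phi> z) = 0"
    using periodic_orbit_in_chart[OF V g z0_def[symmetric] chart(1,3,4,6,7)] by metis
  have hol: "\<Phi> holomorphic_on ball z0 \<delta>" and inj: "inj_on \<Phi> (ball z0 \<delta>)"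
    using holomorphic_on_subset[OF chart(5)] inj_on_subset[OF chart(6)] subset_ball[OF \<delta>(2)] by auto
  obtain \<eta> where \<eta>: "0 < \<eta>" "\<eta> \<le> \<epsilon>" "open {z \<in> ball z0 \<delta>. cmod (\<Phi> z) < \<eta>}"
    "connected {z \<in> ball z0 \<delta>. cmod (\<Phi> z) < \<eta> \<and> Im (\<Phi> z) > 0}"
    "connected {z \<in> ball z0 \<delta>. cmod (\<Phi> z) < \<eta> \<and> Im (\<Phi> z) < 0}"
    using injective_holomorphic_half_discs[OF hol open_ball inj centre_in_ball[THEN iffD2, OF \<delta>(1)] chart(7) \<delta>(3)]
    by blast
  define Q where "Q = {z \<in> ball z0 \<delta>. cmod (\<Phi> z) < \<eta>}"
  have "z0 \<in> Q" "Q \<subseteq> ball z0 \<rho>"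
    using \<delta>(1,2) \<eta>(1) chart(7) by (auto simp: Q_def)
  moreover have "\<exists>\<epsilon>>0. \<forall>e. \<bar>e\<bar> \<le> \<epsilon> \<longrightarrow> h (t + e) \<in> Q \<and> \<Phi> (h (t + e)) = b / a * e"
    if "is_solution (\<lambda>z. b * chi z) V UNIV h" "h t = z0" for b h t
    using primitive_along_solution[OF that(1) \<eta>(3)[folded Q_def], of t \<Phi> a] that(2) \<open>z0 \<in> Q\<close>
      \<open>Q \<subseteq> ball z0 \<rho>\<close> chart(3,4,7) by (metis subsetD add_0)
  ultimately show ?thesis
    using that[of Q \<Phi>] \<eta>(2-5) on_orbit by (auto simp: Q_def z0_def)
qed

lemma inside_contains_one_side:
  fixes K Q :: "complex set" and \<psi> :: "complex \<Rightarrow> real"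
  assumes "z0 \<in> closure (inside K)" "open Q" "z0 \<in> Q"
    and on_K: "\<And>z. z \<in> Q \<Longrightarrow> z \<in> K \<longleftrightarrow> \<psi> z = 0"
    and halves: "connected {z \<in> Q. \<psi> z > 0}" "connected {z \<in> Q. \<psi> z < 0}"
    and xy: "x \<in> Q" "y \<in> Q" "\<psi> x * \<psi> y < 0"
  shows "x \<in> inside K \<or> y \<in> inside K"
proof -
  obtain w where w: "w \<in> Q" "w \<in> inside K"
    using assms(1-3) open_Int_closure_eq_empty[of Q "inside K"] by blast
  then have "\<psi> w \<noteq> 0"
    using on_K inside_no_overlap by blast
  have disjoint: "{z \<in> Q. \<psi> z > 0} \<inter> K = {}" "{z \<in> Q. \<psi> z < 0} \<inter> K = {}"
    using on_K by force+
  have "{z \<in> Q. \<psi> z > 0} \<subseteq> inside K \<or> {z \<in> Q. \<psi> z < 0} \<subseteq> inside K"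
  proof (cases "\<psi> w > 0")
    case True
    then show ?thesis
      using connected_meets_inside_subset[OF halves(1) disjoint(1), of w] w by blast
  next
    case False
    then show ?thesis
      using connected_meets_inside_subset[OF halves(2) disjoint(2), of w] w \<open>\<psi> w \<noteq> 0\<close> by auto
  qed
  moreover have "\<psi> x > 0 \<and> \<psi> y < 0 \<or> \<psi> x < 0 \<and> \<psi> y > 0"
    using xy(3) by (auto simp: mult_less_0_iff)
  ultimately show ?thesis
    using xy(1,2) by blast
qed

lemma transverse_solution_enters_inside:
  fixes chi :: "complex \<Rightarrow> complex"
  assumes V: "open V" "chi holomorphic_on V"
    and gi: "periodic_solution (\<lambda>z. ai * chi z) V Si gi"
    and gj: "is_solution (\<lambda>z. aj * chi z) V UNIV gj"
    and transverse: "Im (aj / ai) \<noteq> 0" and meet: "gi s0 = gj t0"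
  obtains t where "gj t \<in> inside (range gi)"
proof -
  interpret periodic_orbit "\<lambda>z. ai * chi z" V Si gi
    using V gi by unfold_locales (auto intro: holomorphic_intros)
  obtain Q \<Phi> where Q: "open Q" "gi s0 \<in> Q" "\<And>z. z \<in> Q \<Longrightarrow> z \<in> range gi \<longleftrightarrow> Im (\<Phi> z) = 0"
    "connected {z \<in> Q. Im (\<Phi> z) > 0}" "connected {z \<in> Q. Im (\<Phi> z) < 0}"
    and straight: "\<And>b h t. is_solution (\<lambda>z. b * chi z) V UNIV h \<Longrightarrow> h t = gi s0 \<Longrightarrow>
      \<exists>\<epsilon>>0. \<forall>e. \<bar>e\<bar> \<le> \<epsilon> \<longrightarrow> h (t + e) \<in> Q \<and> \<Phi> (h (t + e)) = b / ai * e"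
    using periodic_orbit_flow_box[OF V gi, where s = s0] by blast
  obtain \<epsilon> where "\<epsilon> > 0"
    and straight_gj: "\<And>e. \<bar>e\<bar> \<le> \<epsilon> \<Longrightarrow> gj (t0 + e) \<in> Q \<and> \<Phi> (gj (t0 + e)) = aj / ai * e"
    using straight[OF gj meet[symmetric]] by blast
  then have \<epsilon>: "gj (t0 + \<epsilon>) \<in> Q" "\<Phi> (gj (t0 + \<epsilon>)) = aj / ai * \<epsilon>"
      "gj (t0 + - \<epsilon>) \<in> Q" "\<Phi> (gj (t0 + - \<epsilon>)) = aj / ai * - \<epsilon>"
    using straight_gj[of \<epsilon>] straight_gj[of "- \<epsilon>"] by auto
  have Im_scale: "Im (z * of_real x) = Im z * x" for z x
    by simp
  have "Im (\<Phi> (gj (t0 + \<epsilon>))) * Im (\<Phi> (gj (t0 + - \<epsilon>))) = - (\<epsilon> * Im (aj / ai))\<^sup>2"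
    unfolding \<epsilon>(2,4) Im_scale by (simp add: power2_eq_square)
  moreover have "0 < (\<epsilon> * Im (aj / ai))\<^sup>2"
    using \<open>\<epsilon> > 0\<close> transverse by simp
  ultimately have opposite: "Im (\<Phi> (gj (t0 + \<epsilon>))) * Im (\<Phi> (gj (t0 + - \<epsilon>))) < 0"
    by simp
  have "gi s0 \<in> closure (inside (range gi))"
    using Jordan_inside_outside_orbit by (auto simp: closure_Un_frontier)
  from inside_contains_one_side[OF this Q(1,2) Q(3) Q(4,5) \<epsilon>(1,3) opposite]
  have "gj (t0 + \<epsilon>) \<in> inside (range gi) \<or> gj (t0 + - \<epsilon>) \<in> inside (range gi)" .
  then show ?thesis
    using that by blast
qed

section \<open>Orbits around zeros\<close>

lemma parallel_orbits_eq:
  fixes chi :: "complex \<Rightarrow> complex"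
  assumes V: "open V" "chi holomorphic_on V"
    and gi: "is_solution (\<lambda>z. ai * chi z) V UNIV gi" and gj: "is_solution (\<lambda>z. aj * chi z) V UNIV gj"
    and parallel: "aj / ai \<in> \<real>" and nonzero: "ai \<noteq> 0" "aj \<noteq> 0" and meet: "gi s0 = gj t0"
  shows "range gi = range gj"
proof -
  define r where "r = Re (aj / ai)"
  have "aj = of_real r * ai"
    using parallel nonzero(1) by (simp add: r_def complex_is_Real_iff complex_eq_iff field_simps)
  then have "r \<noteq> 0" "(\<lambda>z. aj * chi z) = (\<lambda>z. r *\<^sub>R (ai * chi z))"
    using nonzero(2) by (auto simp: scaleR_conv_of_real)
  then have "is_solution (\<lambda>z. aj * chi z) V UNIV (\<lambda>t. gi (r * t + (s0 - r * t0)))"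
    using is_solution_affine_reparam[OF gi] by metis
  then have "(\<lambda>t. gi (r * t + (s0 - r * t0))) = gj"
    using V meet by (intro is_solution_unique[OF V(1) _ _ gj, of _ t0]) (auto intro: holomorphic_intros)
  then show ?thesis
    using range_affine_reparam[OF \<open>r \<noteq> 0\<close>] by metis
qed

lemma solution_arcs_loop:
  fixes chi :: "complex \<Rightarrow> complex"
  assumes gi: "is_solution (\<lambda>z. ai * chi z) V UNIV gi" and gj: "is_solution (\<lambda>z. aj * chi z) V UNIV gj"
    and chi: "continuous_on V chi" "\<And>t. chi (gi t) \<noteq> 0" "\<And>t. chi (gj t) \<noteq> 0"
    and ends: "gi s1 = gj b" "gi s2 = gj a"
  defines "P \<equiv> (gj \<circ> linepath a b) +++ (gi \<circ> linepath s1 s2)"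
  shows "valid_path P" "pathfinish P = pathstart P"
    "path_image P = gj ` closed_segment a b \<union> gi ` closed_segment s1 s2"
    "contour_integral P (\<lambda>w. 1 / chi w) = aj * (b - a) + ai * (s2 - s1)"
proof -
  have valid: "valid_path (gj \<circ> linepath a b)" "valid_path (gi \<circ> linepath s1 s2)"
    using chi(1) by (auto intro!: valid_path_solution_linepath[OF gj] valid_path_solution_linepath[OF gi]
        continuous_intros)
  have joined: "pathfinish (gj \<circ> linepath a b) = pathstart (gi \<circ> linepath s1 s2)"
    using ends by (simp add: pathfinish_compose pathstart_compose)
  show "valid_path P" "pathfinish P = pathstart P"
    using valid joined ends by (auto simp: P_def pathfinish_compose pathstart_compose)
  show "path_image P = gj ` closed_segment a b \<union> gi ` closed_segment s1 s2"
    unfolding P_def path_image_join[OF joined] by (simp add: path_image_compose)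
  have "((\<lambda>w. 1 / chi w) has_contour_integral aj * (b - a) + ai * (s2 - s1)) P"
    unfolding P_def using has_contour_integral_solution_linepath[OF gj chi(3)]
      has_contour_integral_solution_linepath[OF gi chi(2)] valid
    by (rule has_contour_integral_join)
  then show "contour_integral P (\<lambda>w. 1 / chi w) = aj * (b - a) + ai * (s2 - s1)"
    by (rule contour_integral_unique)
qed

lemma transverse_orbits_disjoint:
  fixes chi :: "complex \<Rightarrow> complex"
  assumes V: "open V" "chi holomorphic_on V"
    and gi: "periodic_solution (\<lambda>z. ai * chi z) V Si gi"
    and gj: "periodic_solution (\<lambda>z. aj * chi z) V Sj gj"
    and transverse: "Im (aj / ai) \<noteq> 0"
    and real_periods: "\<And>P. valid_path P \<Longrightarrow> pathfinish P = pathstart P \<Longrightarrow>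
      path_image P \<subseteq> inside (range gi) \<union> range gi \<Longrightarrow> (\<forall>z\<in>path_image P. chi z \<noteq> 0) \<Longrightarrow>
      contour_integral P (\<lambda>w. 1 / chi w) / ai \<in> \<real>"
  shows "range gi \<inter> range gj = {}"
proof (rule ccontr)
  interpret I: periodic_orbit "\<lambda>z. ai * chi z" V Si gi
    using V gi by unfold_locales (auto intro: holomorphic_intros)
  interpret J: periodic_orbit "\<lambda>z. aj * chi z" V Sj gj
    using V gj by unfold_locales (auto intro: holomorphic_intros)
  have nz: "\<And>t. chi (gi t) \<noteq> 0" "\<And>t. chi (gj t) \<noteq> 0" and "ai \<noteq> 0"
    using I.field_nonzero J.field_nonzero by auto
  assume "range gi \<inter> range gj \<noteq> {}"
  then obtain s0 t0 where meet: "gi s0 = gj t0"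
    by blast
  define D where "D = inside (range gi)"
  have D: "open D" "frontier D \<subseteq> range gi"
    using I.Jordan_inside_outside_orbit by (auto simp: D_def)
  have "gj t0 \<notin> D"
    using inside_no_overlap[of "range gi"] meet unfolding D_def by (metis disjoint_iff rangeI)
  obtain t where "gj t \<in> D"
    using transverse_solution_enters_inside[OF V gi J.solution transverse meet] by (auto simp: D_def)
  moreover obtain lo hi where "lo \<le> t" "t \<le> hi" "gj lo = gj t0" "gj hi = gj t0"
    using J.bracket_by_returns by blast
  ultimately obtain a b where ab: "a < b" "gj a \<in> range gi" "gj b \<in> range gi"
    "gj ` {a..b} \<subseteq> D \<union> range gi"
    using excursion_into_open[OF is_solution_continuous_on[OF J.solution] D(1,2)] \<open>gj t0 \<notin> D\<close> by metis
  then obtain s1 s2 where s12: "gi s1 = gj b" "gi s2 = gj a"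
    by (metis imageE)
  note loop = solution_arcs_loop[OF I.solution J.solution holomorphic_on_imp_continuous_on[OF V(2)] nz s12]
  have "path_image ((gj \<circ> linepath a b) +++ (gi \<circ> linepath s1 s2)) \<subseteq> inside (range gi) \<union> range gi"
    using ab by (auto simp: loop(3) closed_segment_eq_real_ivl D_def)
  then have "(aj * (b - a) + ai * (s2 - s1)) / ai \<in> \<real>"
    using real_periods[OF loop(1,2)] nz by (auto simp: loop(3,4))
  moreover have "(aj * (b - a) + ai * (s2 - s1)) / ai = aj / ai * of_real (b - a) + of_real (s2 - s1)"
    using \<open>ai \<noteq> 0\<close> by (simp add: field_simps)
  ultimately have "Im (aj / ai * of_real (b - a)) = 0"
    by (simp add: complex_is_Real_iff)
  moreover have "Im (z * of_real r) = Im z * r" for z r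
    by simp
  ultimately have "Im (aj / ai) * (b - a) = 0"
    by metis
  then show False
    using transverse ab(1) by simp
qed

lemma rot_coeff_mult_norm: "rot_coeff c * cmod c = \<i> * c"
  by (cases "c = 0") (simp_all add: rot_coeff_def)

locale orbit_in_periodic_nbhd =
  fixes chi :: "complex \<Rightarrow> complex" and V U W :: "complex set" and p c :: complex
    and S :: real and g :: "real \<Rightarrow> complex"
  assumes open_domain: "open V" and holomorphic: "chi holomorphic_on V" and U_subset: "U \<subseteq> V"
    and zero: "chi p = 0" and residue: "c = residue (\<lambda>w. 1 / chi w) p"
    and nbhd: "periodic_nbhd (\<lambda>z. rot_coeff c * chi z) V U p (2 * pi * cmod c) W"
    and orbit: "periodic_solution (\<lambda>z. rot_coeff c * chi z) V S g"
    and orbit_closure: "range g \<subseteq> closure W"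
begin

sublocale periodic_orbit "\<lambda>z. rot_coeff c * chi z" V S g
  using open_domain holomorphic orbit by unfold_locales (auto intro: holomorphic_intros)

lemma rot_coeff_nonzero: "rot_coeff c \<noteq> 0"
  and chi_orbit_nonzero: "chi (g t) \<noteq> 0"
  using field_nonzero[of t] by auto

lemma zero_unique_in_nbhd:
  assumes "z \<in> W" "chi z = 0"
  shows "z = p"
proof (rule ccontr)
  assume "z \<noteq> p"
  then obtain h where "h 0 = z" "periodic_solution (\<lambda>z. rot_coeff c * chi z) V (2 * pi * cmod c) h"
    using nbhd assms(1) unfolding periodic_nbhd_def by blast
  then have "periodic_orbit (\<lambda>z. rot_coeff c * chi z) V (2 * pi * cmod c) h"
    using open_domain holomorphic by unfold_locales (auto intro: holomorphic_intros)
  from periodic_orbit.field_nonzero[OF this, of 0] show False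
    using \<open>h 0 = z\<close> assms(2) by simp
qed

lemma nbhd_Jordan:
  obtains J where "simple_path J" "pathfinish J = pathstart J" "W = inside (path_image J)"
  using nbhd unfolding periodic_nbhd_def jordan_domain_def by blast

lemma inside_orbit_subset_nbhd: "inside (range g) \<subseteq> W"
proof -
  obtain J where J: "simple_path J" "pathfinish J = pathstart J" "W = inside (path_image J)"
    using nbhd_Jordan by blast
  have "closure W = inside (path_image J) \<union> path_image J"
    using Jordan_inside_outside[OF J(1,2)] J(3) by (simp add: closure_Un_frontier)
  moreover have "closed (range g)"
    using closed_simple_path_image[OF simple_path_orbit_loop] by (simp add: path_image_orbit_loop)
  ultimately show ?thesis
    using inside_subset_Jordan_inside[OF J(1,2)] orbit_closure J(3) by simp
qed

lemma contour_integral_orbit_region: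
  assumes P: "valid_path P" "pathfinish P = pathstart P"
    "path_image P \<subseteq> inside (range g) \<union> range g" "p \<notin> path_image P"
  shows "contour_integral P (\<lambda>w. 1 / chi w) = winding_number P p * (rot_coeff c * (2 * pi * cmod c))"
proof -
  define A where "A = (V \<inter> chi -` (- {0})) \<union> W"
  obtain J where J: "simple_path J" "pathfinish J = pathstart J" "W = inside (path_image J)"
    using nbhd_Jordan by blast
  have "open A"
    unfolding A_def using open_domain holomorphic Jordan_inside_outside[OF J(1,2)] J(3)
    by (intro open_Un continuous_open_preimage holomorphic_on_imp_continuous_on) auto
  moreover have "W \<subseteq> V"
    using nbhd U_subset unfolding periodic_nbhd_def by blast
  then have "(\<lambda>w. 1 / chi w) holomorphic_on A - {p}"
    using zero_unique_in_nbhd holomorphic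
    by (intro holomorphic_intros) (auto simp: A_def elim: holomorphic_on_subset)
  moreover have "inside (range g) \<union> range g \<subseteq> A"
    using inside_orbit_subset_nbhd solution chi_orbit_nonzero
    by (auto simp: A_def is_solution_UNIV_iff)
  ultimately have "contour_integral P (\<lambda>w. 1 / chi w) = 2 * pi * \<i> * winding_number P p * c"
    using residue_theorem_Jordan_region[OF _ _ simple_path_orbit_loop closed_orbit_loop] P
    by (simp add: path_image_orbit_loop residue)
  also have "\<dots> = winding_number P p * (rot_coeff c * (2 * pi * cmod c))"
    using rot_coeff_mult_norm[of c] by (simp add: algebra_simps)
  finally show ?thesis .
qed

lemma zero_inside_orbit: "p \<in> inside (range g)"
proof (rule ccontr)
  assume "p \<notin> inside (range g)"
  define P where "P = g \<circ> linepath 0 S"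
  have "valid_path P"
    unfolding P_def using holomorphic_field
    by (intro valid_path_solution_linepath[OF solution] holomorphic_on_imp_continuous_on)
  moreover have "pathfinish P = pathstart P"
    using periodic[of 0] by (simp add: P_def pathfinish_compose pathstart_compose)
  moreover have "path_image P \<subseteq> range g"
    by (auto simp: P_def path_image_compose)
  moreover have "p \<notin> range g"
    using chi_orbit_nonzero zero by auto
  moreover have "p \<in> outside (range g)"
    using \<open>p \<notin> inside (range g)\<close> \<open>p \<notin> range g\<close> by (simp add: outside_inside)
  ultimately have "winding_number P p = 0"
    using outside_mono winding_number_zero_in_outside valid_path_imp_path by blast
  then have "contour_integral P (\<lambda>w. 1 / chi w) = 0"
    using contour_integral_orbit_region[of P] \<open>valid_path P\<close> \<open>pathfinish P = pathstart P\<close>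
      \<open>path_image P \<subseteq> range g\<close> \<open>p \<notin> range g\<close> by auto
  moreover have "contour_integral P (\<lambda>w. 1 / chi w) = rot_coeff c * of_real (S - 0)"
    unfolding P_def
    by (intro contour_integral_unique has_contour_integral_solution_linepath[OF solution]
        chi_orbit_nonzero)
  ultimately show False
    using rot_coeff_nonzero period_pos by simp
qed

lemma orbit_periods_real:
  assumes "valid_path P" "pathfinish P = pathstart P"
    "path_image P \<subseteq> inside (range g) \<union> range g" "\<forall>z\<in>path_image P. chi z \<noteq> 0"
  shows "contour_integral P (\<lambda>w. 1 / chi w) / rot_coeff c \<in> \<real>"
proof -
  have "p \<notin> path_image P"
    using assms(4) zero by blast
  then have "winding_number P p \<in> \<int>"
    using integer_winding_number[OF valid_path_imp_path] assms(1,2) by blast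
  then show ?thesis
    using contour_integral_orbit_region[OF assms(1-3) \<open>p \<notin> path_image P\<close>] rot_coeff_nonzero
    by (auto elim!: Ints_cases)
qed

end

lemma orbits_around_distinct_zeros_disjoint:
  assumes "orbit_in_periodic_nbhd chi V U W p c S g"
    and "orbit_in_periodic_nbhd chi V U' W' q d S' h" and "p \<noteq> q"
  shows "range g \<inter> range h = {}"
proof -
  interpret I: orbit_in_periodic_nbhd chi V U W p c S g by fact
  interpret J: orbit_in_periodic_nbhd chi V U' W' q d S' h by fact
  show ?thesis
  proof (cases "rot_coeff d / rot_coeff c \<in> \<real>")
    case True
    show ?thesis
    proof (rule ccontr)
      assume "range g \<inter> range h \<noteq> {}"
      then obtain s t where "g s = h t"
        by blast
      then have "range g = range h"
        by (rule parallel_orbits_eq[OF I.open_domain I.holomorphic I.solution J.solution True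
              I.rot_coeff_nonzero J.rot_coeff_nonzero])
      then have "p \<in> W'"
        using I.zero_inside_orbit J.inside_orbit_subset_nbhd by auto
      then show False
        using J.zero_unique_in_nbhd I.zero \<open>p \<noteq> q\<close> by blast
    qed
  next
    case False
    then have "Im (rot_coeff d / rot_coeff c) \<noteq> 0"
      by (simp add: complex_is_Real_iff)
    then show ?thesis
      by (rule transverse_orbits_disjoint[OF I.open_domain I.holomorphic I.orbit J.orbit _
            I.orbit_periods_real])
  qed
qed

theorem lemma2p2:
  fixes U V :: "complex set" and c :: "real \<Rightarrow> complex" and chi :: "complex \<Rightarrow> complex"
    and p\<^sub>i p\<^sub>j :: complex and W\<^sub>i W\<^sub>j \<gamma>\<^sub>i \<gamma>\<^sub>j :: "complex set"
  assumes "smooth_jordan_curve c" and "U = inside (path_image c)"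
    and "open V" and "closure U \<subseteq> V" and "chi holomorphic_on V"
    and "\<forall>z \<in> frontier U. chi z \<noteq> 0"
    and "\<forall>z \<in> U. chi z = 0 \<longrightarrow> deriv chi z \<noteq> 0"
    and "p\<^sub>i \<in> U" and "chi p\<^sub>i = 0" and "p\<^sub>j \<in> U" and "chi p\<^sub>j = 0" and "p\<^sub>i \<noteq> p\<^sub>j"
    and "canonical_nbhd (\<lambda>z. rot_coeff (residue (\<lambda>w. 1 / chi w) p\<^sub>i) * chi z) V U p\<^sub>i
           (2 * pi * cmod (residue (\<lambda>w. 1 / chi w) p\<^sub>i)) W\<^sub>i"
    and "canonical_nbhd (\<lambda>z. rot_coeff (residue (\<lambda>w. 1 / chi w) p\<^sub>j) * chi z) V U p\<^sub>j
           (2 * pi * cmod (residue (\<lambda>w. 1 / chi w) p\<^sub>j)) W\<^sub>j"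
    and "closed_trajectory (\<lambda>z. rot_coeff (residue (\<lambda>w. 1 / chi w) p\<^sub>i) * chi z) V \<gamma>\<^sub>i"
    and "\<gamma>\<^sub>i \<subseteq> closure W\<^sub>i"
    and "closed_trajectory (\<lambda>z. rot_coeff (residue (\<lambda>w. 1 / chi w) p\<^sub>j) * chi z) V \<gamma>\<^sub>j"
    and "\<gamma>\<^sub>j \<subseteq> closure W\<^sub>j"
  shows "\<gamma>\<^sub>i \<inter> \<gamma>\<^sub>j = {}"
proof -
  obtain gi Si gj Sj where
    gi: "periodic_solution (\<lambda>z. rot_coeff (residue (\<lambda>w. 1 / chi w) p\<^sub>i) * chi z) V Si gi" "\<gamma>\<^sub>i = range gi"
    and gj: "periodic_solution (\<lambda>z. rot_coeff (residue (\<lambda>w. 1 / chi w) p\<^sub>j) * chi z) V Sj gj" "\<gamma>\<^sub>j = range gj"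
    using assms(15,17) unfolding closed_trajectory_def by metis
  have "U \<subseteq> V"
    using assms(4) closure_subset by blast
  then have "orbit_in_periodic_nbhd chi V U W\<^sub>i p\<^sub>i (residue (\<lambda>w. 1 / chi w) p\<^sub>i) Si gi"
    and "orbit_in_periodic_nbhd chi V U W\<^sub>j p\<^sub>j (residue (\<lambda>w. 1 / chi w) p\<^sub>j) Sj gj"
    using assms gi gj unfolding orbit_in_periodic_nbhd_def canonical_nbhd_def by auto
  then show ?thesis
    unfolding gi(2) gj(2) using assms(12) by (rule orbits_around_distinct_zeros_disjoint)
qed

end
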